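(* Consider the system $S'=1-IS-S$, $I'=IS-I$ on $\mathbb R^2$. For $c\in[0,1)$ let $\Gamma_c=\{(S,I)\in\mathbb R^2: S\ge0,\ I\ge0,\ S+I\le1-c\}$. Then for every $c\in(0,1)$ the system has the conditional Lipschitz shadowing property in $\Gamma_c$, but it does not have the conditional Lipschitz shadowing property in $\Gamma_0$.
   Context: For continuous $g\colon[0,\infty)\times\mathbb R^n\to\mathbb R^n$ and $\tau\in(0,\infty]$, a pseudosolution of $x'=g(t,x)$ on $[0,\tau)$ is a $C^1$ map $y\colon[0,\tau)\to\mathbb R^n$ with $\sigma_y:=\sup_{0\le t<\tau}|y'(t)-g(t,y(t))|<\infty$ (for a fixed norm $|\cdot|$ on $\mathbb R^n$; the property below does not depend on the norm). The equation has the conditional Lipschitz shadowing property in $H\neq\emptyset$ if there exist $\varepsilon_0,\kappa>0$ such that whenever $0<\varepsilon\le\varepsilon_0$ and $y$ is a pseudosolution on $[0,\tau)$ ($\tau\in(0,\infty]$) with $\sigma_y\le\varepsilon$ and $y(t)\in H$ for all $t\in[0,\tau)$, there is a solution $x$ of the equation defined on $[0,\tau)$ with $\sup_{0\le t<\tau}|x(t)-y(t)|\le\kappa\varepsilon$. *)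

theory Defs
  imports "HOL-Analysis.Analysis" "HOL-Library.Extended_Real"
begin

definition tdom :: "ereal \<Rightarrow> real set" where
  "tdom \<tau> = {t. 0 \<le> t \<and> ereal t < \<tau>}"

text \<open>y is a C^1 pseudosolution of x' = g(t,x) on [0,tau) with sigma_y \<le> eps
  (sigma_y is a supremum, so sigma_y \<le> eps iff the pointwise defect is \<le> eps).\<close>
definition pseudosol_le ::
  "(real \<Rightarrow> 'a::real_normed_vector \<Rightarrow> 'a) \<Rightarrow> ereal \<Rightarrow> (real \<Rightarrow> 'a) \<Rightarrow> real \<Rightarrow> bool" where
  "pseudosol_le g \<tau> y \<epsilon> \<longleftrightarrow>
     (\<exists>y'. (\<forall>t\<in>tdom \<tau>. (y has_vector_derivative y' t) (at t within tdom \<tau>))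
         \<and> continuous_on (tdom \<tau>) y'
         \<and> (\<forall>t\<in>tdom \<tau>. norm (y' t - g t (y t)) \<le> \<epsilon>))"

definition is_solution ::
  "(real \<Rightarrow> 'a::real_normed_vector \<Rightarrow> 'a) \<Rightarrow> ereal \<Rightarrow> (real \<Rightarrow> 'a) \<Rightarrow> bool" where
  "is_solution g \<tau> x \<longleftrightarrow>
     (\<forall>t\<in>tdom \<tau>. (x has_vector_derivative g t (x t)) (at t within tdom \<tau>))"

definition cond_lip_shadowing ::
  "(real \<Rightarrow> 'a::real_normed_vector \<Rightarrow> 'a) \<Rightarrow> 'a set \<Rightarrow> bool" where
  "cond_lip_shadowing g H \<longleftrightarrow>
     (\<exists>\<epsilon>0>0. \<exists>\<kappa>>0. \<forall>\<epsilon> \<tau> y.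
        0 < \<epsilon> \<and> \<epsilon> \<le> \<epsilon>0 \<and> 0 < \<tau> \<and> pseudosol_le g \<tau> y \<epsilon>
        \<and> (\<forall>t\<in>tdom \<tau>. y t \<in> H)
        \<longrightarrow> (\<exists>x. is_solution g \<tau> x \<and> (\<forall>t\<in>tdom \<tau>. norm (x t - y t) \<le> \<kappa> * \<epsilon>)))"

text \<open>The SI system S' = 1 - IS - S, I' = IS - I on R^2, with S = x$1, I = x$2.\<close>
definition SI_field :: "real \<Rightarrow> real^2 \<Rightarrow> real^2" where
  "SI_field t x = vector [1 - x$2 * x$1 - x$1, x$2 * x$1 - x$2]"

definition Gamma_set :: "real \<Rightarrow> (real^2) set" where
  "Gamma_set c = {x. 0 \<le> x$1 \<and> 0 \<le> x$2 \<and> x$1 + x$2 \<le> 1 - c}"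

end

theory Submission
  imports Defs
begin

text \<open>On \<open>Gamma_set c\<close> with \<open>c > 0\<close> the total population \<open>N = S + I\<close> of a pseudosolution
  satisfies \<open>N' \<ge> c / 2\<close> while staying in \<open>[0, 1]\<close>, so every pseudosolution lives on a time
  interval of length at most \<open>2 / c\<close>. There it is shadowed by the exact solution with the same
  initial value, which is explicit (\<open>N' = 1 - N\<close> is linear and \<open>I\<close> then solves a Bernoulli
  equation): the differences in \<open>N\<close> and in \<open>I\<close> obey linear equations with bounded coefficients
  and forcing of size \<open>O(\<epsilon>)\<close>, and an integrating factor bounds them on bounded intervals.

  On \<open>Gamma_set 0\<close> the point \<open>(1 - d, d)\<close> is an equilibrium up to a defect \<open>2 d\<^sup>2\<close>, but a true
  solution staying within \<open>d / 2\<close> of it loses infected population at rate at least \<open>d\<^sup>2 / 4\<close> and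
  must leave within time \<open>8 / d\<close>. So Lipschitz shadowing with constant \<open>\<kappa>\<close> fails as soon as
  \<open>2 \<kappa> d\<^sup>2 < d / 2\<close>.\<close>

lemma DERIV_lower_bound_Icc:
  fixes f f' :: "real \<Rightarrow> real"
  assumes "a \<le> b"
    and "\<And>s. s \<in> {a..b} \<Longrightarrow> (f has_real_derivative f' s) (at s within {a..b})"
    and "\<And>s. s \<in> {a..b} \<Longrightarrow> B \<le> f' s"
  shows "B * (b - a) \<le> f b - f a"
proof -
  obtain s where s: "s \<in> {a..b}" "f b - f a = f' s * (b - a)"
    using mvt_very_simple[OF assms(1), of f "\<lambda>s. (*) (f' s)"] assms(2)
    by (auto simp: has_field_derivative_def)
  then show ?thesis
    using assms(1) assms(3)[OF s(1)] by (simp add: mult_right_mono)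
qed

lemma DERIV_upper_bound_Icc:
  fixes f f' :: "real \<Rightarrow> real"
  assumes "a \<le> b"
    and "\<And>s. s \<in> {a..b} \<Longrightarrow> (f has_real_derivative f' s) (at s within {a..b})"
    and "\<And>s. s \<in> {a..b} \<Longrightarrow> f' s \<le> B"
  shows "f b - f a \<le> B * (b - a)"
proof -
  have "- B * (b - a) \<le> - f b - - f a"
    by (rule DERIV_lower_bound_Icc[OF assms(1)]) (use assms in \<open>auto intro: DERIV_minus\<close>)
  then show ?thesis by simp
qed

text \<open>With \<open>P = \<integral>\<^sub>0 a\<close> one has \<open>(exp (- P) w)' = exp (- P) b\<close> and \<open>\<bar>P\<bar> \<le> A t\<close>.\<close>
lemma linear_ode_deviation_bound:
  fixes w a b :: "real \<Rightarrow> real"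
  assumes t: "0 \<le> t"
    and w': "\<And>s. s \<in> {0..t} \<Longrightarrow> (w has_real_derivative a s * w s + b s) (at s within {0..t})"
    and a_cont: "continuous_on {0..t} a"
    and a_bound: "\<And>s. s \<in> {0..t} \<Longrightarrow> \<bar>a s\<bar> \<le> A"
    and b_bound: "\<And>s. s \<in> {0..t} \<Longrightarrow> \<bar>b s\<bar> \<le> B"
    and w0: "w 0 = 0"
  shows "\<bar>w t\<bar> \<le> B * t * exp (2 * A * t)"
proof -
  have A: "0 \<le> A"
    using a_bound[of 0] t by fastforce
  define P where "P u = integral {0..u} a" for u
  have P': "(P has_real_derivative a s) (at s within {0..t})" if "s \<in> {0..t}" for s
    unfolding P_def[abs_def] using a_cont that by (rule integral_has_real_derivative)
  have P_bound: "\<bar>P s\<bar> \<le> A * t" if s: "s \<in> {0..t}" for s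
  proof -
    have "\<bar>P s - P 0\<bar> \<le> A * \<bar>s - 0\<bar>"
      using field_differentiable_bound[of "{0..t}" P a A s 0] P' a_bound s t by auto
    also have "\<dots> \<le> A * t"
      using s A by (intro mult_left_mono) auto
    finally show ?thesis by (simp add: P_def)
  qed
  define \<phi> where "\<phi> s = exp (- P s) * w s" for s
  have \<phi>': "(\<phi> has_real_derivative exp (- P s) * b s) (at s within {0..t})"
    if s: "s \<in> {0..t}" for s
    unfolding \<phi>_def[abs_def]
    by (rule DERIV_cong[OF DERIV_mult[OF DERIV_chain2[OF DERIV_exp DERIV_minus[OF P'[OF s]]] w'[OF s]]])
      (simp add: algebra_simps)
  have \<phi>'_bound: "\<bar>exp (- P s) * b s\<bar> \<le> exp (A * t) * B" if s: "s \<in> {0..t}" for s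
    unfolding abs_mult using P_bound[OF s] b_bound[OF s] by (intro mult_mono) auto
  have "\<bar>\<phi> t - \<phi> 0\<bar> \<le> exp (A * t) * B * \<bar>t - 0\<bar>"
    using field_differentiable_bound[of "{0..t}" \<phi> "\<lambda>s. exp (- P s) * b s" "exp (A * t) * B" t 0] \<phi>' \<phi>'_bound t
    by auto
  then have \<phi>_bound: "\<bar>\<phi> t\<bar> \<le> exp (A * t) * B * t"
    using t by (simp add: \<phi>_def w0)
  have "\<bar>w t\<bar> = exp (P t) * \<bar>\<phi> t\<bar>"
    by (simp add: \<phi>_def abs_mult exp_minus)
  also have "\<dots> \<le> exp (A * t) * (exp (A * t) * B * t)"
    using P_bound[of t] \<phi>_bound t by (intro mult_mono) auto
  also have "\<dots> = B * t * exp (2 * A * t)"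
    by (simp add: mult_exp_exp)
  finally show ?thesis .
qed

lemma integral_has_real_derivative_atLeast:
  assumes "continuous_on {a..} g" "a \<le> t"
  shows "((\<lambda>x. integral {a..x} g) has_real_derivative g t) (at t within {a..})"
proof -
  have "at t within {a..t + 1} = at t within {a..}"
    by (rule at_within_nhd[where S = "{t - 1<..<t + 1}"]) auto
  moreover have "continuous_on {a..t + 1} g"
    using assms(1) by (rule continuous_on_subset) auto
  ultimately show ?thesis
    using integral_has_real_derivative[of a "t + 1" g t] assms(2) by simp
qed

lemma has_vector_derivative_vec_nth:
  fixes y :: "real \<Rightarrow> real^'n"
  assumes "(y has_vector_derivative d) F"
  shows "((\<lambda>s. y s $ i) has_real_derivative d $ i) F"
  using bounded_linear.has_vector_derivative[OF bounded_linear_vec_nth assms, of i]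
  by (simp add: has_real_derivative_iff_has_vector_derivative)

lemma has_vector_derivative_vector2:
  fixes f g :: "real \<Rightarrow> real"
  assumes "(f has_real_derivative f') F" "(g has_real_derivative g') F"
  shows "((\<lambda>t. vector [f t, g t] :: real^2) has_vector_derivative vector [f', g']) F"
proof -
  define e\<^sub>1 e\<^sub>2 :: "real^2" where "e\<^sub>1 = vector [1, 0]" and "e\<^sub>2 = vector [0, 1]"
  have eq: "vector [a, b] = a *\<^sub>R e\<^sub>1 + b *\<^sub>R e\<^sub>2" for a b :: real
    by (simp add: e\<^sub>1_def e\<^sub>2_def vec_eq_iff forall_2)
  have "((\<lambda>t. f t *\<^sub>R e\<^sub>1 + g t *\<^sub>R e\<^sub>2) has_vector_derivative f' *\<^sub>R e\<^sub>1 + g' *\<^sub>R e\<^sub>2) F"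
    using assms unfolding has_real_derivative_iff_has_vector_derivative
    by (intro has_vector_derivative_add bounded_linear.has_vector_derivative[OF bounded_linear_scaleR_left])
  then show ?thesis
    by (simp only: eq)
qed

lemma tdom_subset_atLeast: "tdom \<tau> \<subseteq> {0..}"
  by (auto simp: tdom_def)

lemma atLeastAtMost_subset_tdom: "t \<in> tdom \<tau> \<Longrightarrow> {0..t} \<subseteq> tdom \<tau>"
  by (auto simp: tdom_def intro: order_le_less_trans[of "ereal _" "ereal t"])

lemma Gamma_set_antimono: "c \<le> c' \<Longrightarrow> Gamma_set c' \<subseteq> Gamma_set c"
  by (auto simp: Gamma_set_def)

lemma SI_field_nth [simp]:
  "SI_field t x $ 1 = 1 - x $ 2 * x $ 1 - x $ 1"
  "SI_field t x $ 2 = x $ 2 * x $ 1 - x $ 2"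
  by (simp_all add: SI_field_def)

text \<open>The total population \<open>N = S + I\<close> solves \<open>N' = 1 - N\<close>; then \<open>I' = I (N - 1) - I\<^sup>2\<close> is a
  Bernoulli equation, and \<open>SI_growth N\<^sub>0 t = exp (\<integral>\<^sub>0\<^sup>t (N - 1))\<close> is its integrating factor.\<close>
definition SI_total :: "real \<Rightarrow> real \<Rightarrow> real" where
  "SI_total N\<^sub>0 t = 1 + (N\<^sub>0 - 1) * exp (- t)"

definition SI_growth :: "real \<Rightarrow> real \<Rightarrow> real" where
  "SI_growth N\<^sub>0 t = exp ((N\<^sub>0 - 1) * (1 - exp (- t)))"

definition SI_infected :: "real \<Rightarrow> real \<Rightarrow> real \<Rightarrow> real" where
  "SI_infected N\<^sub>0 I\<^sub>0 t = I\<^sub>0 * SI_growth N\<^sub>0 t / (1 + I\<^sub>0 * integral {0..t} (SI_growth N\<^sub>0))"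

definition SI_solution :: "real \<Rightarrow> real \<Rightarrow> real \<Rightarrow> real^2" where
  "SI_solution N\<^sub>0 I\<^sub>0 t = vector [SI_total N\<^sub>0 t - SI_infected N\<^sub>0 I\<^sub>0 t, SI_infected N\<^sub>0 I\<^sub>0 t]"

lemma SI_total_deriv: "(SI_total N\<^sub>0 has_real_derivative 1 - SI_total N\<^sub>0 t) (at t)"
  unfolding SI_total_def[abs_def]
  by (auto intro!: derivative_eq_intros simp: algebra_simps)

lemma SI_growth_deriv:
  "(SI_growth N\<^sub>0 has_real_derivative SI_growth N\<^sub>0 t * (SI_total N\<^sub>0 t - 1)) (at t)"
  unfolding SI_growth_def[abs_def] SI_total_def
  by (auto intro!: derivative_eq_intros simp: algebra_simps)

lemma SI_growth_pos: "0 < SI_growth N\<^sub>0 t"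
  by (simp add: SI_growth_def)

lemma SI_growth_le_1: "N\<^sub>0 \<le> 1 \<Longrightarrow> 0 \<le> t \<Longrightarrow> SI_growth N\<^sub>0 t \<le> 1"
  by (simp add: SI_growth_def mult_nonpos_nonneg)

lemma SI_growth_integral_deriv:
  "0 \<le> t \<Longrightarrow> ((\<lambda>t. integral {0..t} (SI_growth N\<^sub>0)) has_real_derivative SI_growth N\<^sub>0 t)
     (at t within {0..})"
  by (rule integral_has_real_derivative_atLeast) (auto simp: SI_growth_def intro!: continuous_intros)

lemma SI_growth_integral_nonneg: "0 \<le> t \<Longrightarrow> 0 \<le> integral {0..t} (SI_growth N\<^sub>0)"
  by (rule integral_nonneg) (auto simp: SI_growth_def intro!: integrable_continuous_interval continuous_intros)

lemma SI_infected_deriv: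
  assumes "0 \<le> I\<^sub>0" "0 \<le> t"
  shows "(SI_infected N\<^sub>0 I\<^sub>0 has_real_derivative
           SI_infected N\<^sub>0 I\<^sub>0 t * (SI_total N\<^sub>0 t - SI_infected N\<^sub>0 I\<^sub>0 t - 1)) (at t within {0..})"
proof -
  have "1 \<le> 1 + I\<^sub>0 * integral {0..t} (SI_growth N\<^sub>0)"
    using assms SI_growth_integral_nonneg by simp
  then show ?thesis
    unfolding SI_infected_def[abs_def]
    by (rule_tac DERIV_cong[OF DERIV_divide[OF DERIV_cmult DERIV_add[OF DERIV_const DERIV_cmult]]])
      (auto intro: has_field_derivative_at_within SI_growth_deriv SI_growth_integral_deriv assms
        simp: field_simps)
qed

lemma SI_infected_bounds:
  assumes "0 \<le> I\<^sub>0" "I\<^sub>0 \<le> 1" "N\<^sub>0 \<le> 1" "0 \<le> t"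
  shows "0 \<le> SI_infected N\<^sub>0 I\<^sub>0 t" "SI_infected N\<^sub>0 I\<^sub>0 t \<le> 1"
proof -
  have den: "1 \<le> 1 + I\<^sub>0 * integral {0..t} (SI_growth N\<^sub>0)"
    using assms SI_growth_integral_nonneg by simp
  then show "0 \<le> SI_infected N\<^sub>0 I\<^sub>0 t"
    unfolding SI_infected_def using assms SI_growth_pos[of N\<^sub>0 t]
    by (intro divide_nonneg_pos mult_nonneg_nonneg) auto
  have "SI_infected N\<^sub>0 I\<^sub>0 t \<le> I\<^sub>0 * SI_growth N\<^sub>0 t / 1"
    unfolding SI_infected_def using den assms SI_growth_pos[of N\<^sub>0 t]
    by (intro divide_left_mono) auto
  also have "\<dots> \<le> 1"
    using assms SI_growth_le_1[of N\<^sub>0 t] SI_growth_pos[of N\<^sub>0 t] by (simp add: mult_le_one)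
  finally show "SI_infected N\<^sub>0 I\<^sub>0 t \<le> 1" .
qed

lemma SI_total_0 [simp]: "SI_total N\<^sub>0 0 = N\<^sub>0"
  by (simp add: SI_total_def)

lemma SI_infected_0 [simp]: "SI_infected N\<^sub>0 I\<^sub>0 0 = I\<^sub>0"
  by (simp add: SI_infected_def SI_growth_def)

lemma SI_solution_is_solution:
  assumes "0 \<le> I\<^sub>0"
  shows "is_solution SI_field \<tau> (SI_solution N\<^sub>0 I\<^sub>0)"
  unfolding is_solution_def
proof
  fix t assume "t \<in> tdom \<tau>"
  then have t: "0 \<le> t"
    using tdom_subset_atLeast by auto
  let ?N = "SI_total N\<^sub>0 t" and ?I = "SI_infected N\<^sub>0 I\<^sub>0 t"
  have "(SI_solution N\<^sub>0 I\<^sub>0 has_vector_derivative vector [(1 - ?N) - ?I * (?N - ?I - 1), ?I * (?N - ?I - 1)])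
      (at t within {0..})"
    unfolding SI_solution_def[abs_def]
    using has_vector_derivative_vector2[OF DERIV_diff[OF has_field_derivative_at_within[OF SI_total_deriv]
          SI_infected_deriv[OF assms t]] SI_infected_deriv[OF assms t]] .
  moreover have "vector [(1 - ?N) - ?I * (?N - ?I - 1), ?I * (?N - ?I - 1)] = SI_field t (SI_solution N\<^sub>0 I\<^sub>0 t)"
    by (simp add: SI_solution_def vec_eq_iff forall_2 algebra_simps)
  ultimately show "(SI_solution N\<^sub>0 I\<^sub>0 has_vector_derivative SI_field t (SI_solution N\<^sub>0 I\<^sub>0 t))
      (at t within tdom \<tau>)"
    using has_vector_derivative_within_subset tdom_subset_atLeast by metis
qed

definition SI_deviation_factor :: "real \<Rightarrow> real" where
  "SI_deviation_factor t = 2 * t * exp (2 * t) + 2 * (2 * t * exp (2 * t) + 1) * t * exp (4 * t)"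

lemma SI_deviation_factor_pos: "0 < t \<Longrightarrow> 0 < SI_deviation_factor t"
  by (simp add: SI_deviation_factor_def add_pos_nonneg)

lemma SI_deviation_factor_mono: "0 \<le> s \<Longrightarrow> s \<le> t \<Longrightarrow> SI_deviation_factor s \<le> SI_deviation_factor t"
  unfolding SI_deviation_factor_def by (intro add_mono mult_mono) auto

locale SI_perturbed_solution =
  fixes \<tau> :: ereal and y :: "real \<Rightarrow> real^2" and \<epsilon> :: real and e\<^sub>1 e\<^sub>2 :: "real \<Rightarrow> real"
  assumes e\<^sub>1_bound: "\<And>s. s \<in> tdom \<tau> \<Longrightarrow> \<bar>e\<^sub>1 s\<bar> \<le> \<epsilon>"
    and e\<^sub>2_bound: "\<And>s. s \<in> tdom \<tau> \<Longrightarrow> \<bar>e\<^sub>2 s\<bar> \<le> \<epsilon>"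
    and S_deriv: "\<And>s. s \<in> tdom \<tau> \<Longrightarrow>
      ((\<lambda>s. y s $ 1) has_real_derivative 1 - y s $ 2 * y s $ 1 - y s $ 1 + e\<^sub>1 s) (at s within tdom \<tau>)"
    and I_deriv: "\<And>s. s \<in> tdom \<tau> \<Longrightarrow>
      ((\<lambda>s. y s $ 2) has_real_derivative y s $ 2 * y s $ 1 - y s $ 2 + e\<^sub>2 s) (at s within tdom \<tau>)"

lemma pseudosol_le_SI_field_imp_perturbed_solution:
  assumes "pseudosol_le SI_field \<tau> y \<epsilon>"
  shows "\<exists>e\<^sub>1 e\<^sub>2. SI_perturbed_solution \<tau> y \<epsilon> e\<^sub>1 e\<^sub>2"
proof -
  obtain y' where y': "\<And>s. s \<in> tdom \<tau> \<Longrightarrow> (y has_vector_derivative y' s) (at s within tdom \<tau>)"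
    and defect: "\<And>s. s \<in> tdom \<tau> \<Longrightarrow> norm (y' s - SI_field s (y s)) \<le> \<epsilon>"
    using assms unfolding pseudosol_le_def by blast
  define e where "e i s = (y' s - SI_field s (y s)) $ i" for i s
  have bound: "\<bar>e i s\<bar> \<le> \<epsilon>" if "s \<in> tdom \<tau>" for i s
    using component_le_norm_cart[of "y' s - SI_field s (y s)" i] defect[OF that] by (simp add: e_def)
  have deriv: "((\<lambda>s. y s $ i) has_real_derivative SI_field s (y s) $ i + e i s) (at s within tdom \<tau>)"
    if "s \<in> tdom \<tau>" for i s
    using has_vector_derivative_vec_nth[OF y'[OF that], of i] by (simp add: e_def)
  have "SI_perturbed_solution \<tau> y \<epsilon> (e 1) (e 2)"
    by unfold_locales (use bound deriv[of _ 1] deriv[of _ 2] in auto)+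
  then show ?thesis by blast
qed

context SI_perturbed_solution
begin

lemma derivs_within_Icc:
  assumes "t \<in> tdom \<tau>" "s \<in> {0..t}"
  shows "((\<lambda>s. y s $ 1) has_real_derivative 1 - y s $ 2 * y s $ 1 - y s $ 1 + e\<^sub>1 s) (at s within {0..t})"
    and "((\<lambda>s. y s $ 2) has_real_derivative y s $ 2 * y s $ 1 - y s $ 2 + e\<^sub>2 s) (at s within {0..t})"
    and "((\<lambda>s. y s $ 1 + y s $ 2) has_real_derivative 1 - (y s $ 1 + y s $ 2) + (e\<^sub>1 s + e\<^sub>2 s))
           (at s within {0..t})"
proof -
  have s: "s \<in> tdom \<tau>" and sub: "{0..t} \<subseteq> tdom \<tau>"
    using assms atLeastAtMost_subset_tdom[OF assms(1)] by auto
  show S': "((\<lambda>s. y s $ 1) has_real_derivative 1 - y s $ 2 * y s $ 1 - y s $ 1 + e\<^sub>1 s) (at s within {0..t})"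
    using DERIV_subset[OF S_deriv[OF s] sub] .
  show I': "((\<lambda>s. y s $ 2) has_real_derivative y s $ 2 * y s $ 1 - y s $ 2 + e\<^sub>2 s) (at s within {0..t})"
    using DERIV_subset[OF I_deriv[OF s] sub] .
  show "((\<lambda>s. y s $ 1 + y s $ 2) has_real_derivative 1 - (y s $ 1 + y s $ 2) + (e\<^sub>1 s + e\<^sub>2 s))
      (at s within {0..t})"
    by (rule DERIV_cong[OF DERIV_add[OF S' I']]) (simp add: algebra_simps)
qed

lemma time_bound_in_Gamma:
  assumes c: "0 < c" and \<epsilon>: "\<epsilon> \<le> c / 4"
    and y_in: "\<And>s. s \<in> tdom \<tau> \<Longrightarrow> y s \<in> Gamma_set c" and t: "t \<in> tdom \<tau>"
  shows "t \<le> 2 / c"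
proof -
  have sub: "{0..t} \<subseteq> tdom \<tau>" and t0: "0 \<le> t"
    using t atLeastAtMost_subset_tdom by (auto simp: tdom_def)
  have "c / 2 * (t - 0) \<le> (y t $ 1 + y t $ 2) - (y 0 $ 1 + y 0 $ 2)"
  proof (rule DERIV_lower_bound_Icc[OF t0 derivs_within_Icc(3)[OF t]])
    fix s assume "s \<in> {0..t}"
    then have "s \<in> tdom \<tau>" using sub by blast
    then show "c / 2 \<le> 1 - (y s $ 1 + y s $ 2) + (e\<^sub>1 s + e\<^sub>2 s)"
      using y_in[of s] e\<^sub>1_bound[of s] e\<^sub>2_bound[of s] \<epsilon> by (auto simp: Gamma_set_def abs_le_iff)
  qed
  moreover have "y t $ 1 + y t $ 2 \<le> 1" "0 \<le> y 0 $ 1 + y 0 $ 2"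
    using y_in[OF t] y_in[of 0] sub t0 c by (auto simp: Gamma_set_def)
  ultimately show ?thesis
    using c by (simp add: field_simps)
qed

lemma total_deviation:
  assumes t: "t \<in> tdom \<tau>"
  shows "\<bar>y t $ 1 + y t $ 2 - SI_total (y 0 $ 1 + y 0 $ 2) t\<bar> \<le> 2 * \<epsilon> * t * exp (2 * t)"
proof -
  let ?N\<^sub>0 = "y 0 $ 1 + y 0 $ 2"
  have sub: "{0..t} \<subseteq> tdom \<tau>" and t0: "0 \<le> t"
    using t atLeastAtMost_subset_tdom by (auto simp: tdom_def)
  have "\<bar>y t $ 1 + y t $ 2 - SI_total ?N\<^sub>0 t\<bar> \<le> (2 * \<epsilon>) * t * exp (2 * 1 * t)"
  proof (rule linear_ode_deviation_bound[where a = "\<lambda>_. -1" and b = "\<lambda>s. e\<^sub>1 s + e\<^sub>2 s", OF t0])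
    fix s assume s: "s \<in> {0..t}"
    show "((\<lambda>s. y s $ 1 + y s $ 2 - SI_total ?N\<^sub>0 s) has_real_derivative
        -1 * (y s $ 1 + y s $ 2 - SI_total ?N\<^sub>0 s) + (e\<^sub>1 s + e\<^sub>2 s)) (at s within {0..t})"
      by (rule DERIV_cong[OF DERIV_diff[OF derivs_within_Icc(3)[OF t s]
              has_field_derivative_at_within[OF SI_total_deriv]]])
        (simp add: algebra_simps)
    show "\<bar>e\<^sub>1 s + e\<^sub>2 s\<bar> \<le> 2 * \<epsilon>"
      using s sub e\<^sub>1_bound[of s] e\<^sub>2_bound[of s] by (auto simp: abs_le_iff)
  qed auto
  then show ?thesis by simp
qed

lemma infected_deviation:
  assumes y_in: "\<And>s. s \<in> tdom \<tau> \<Longrightarrow> y s \<in> Gamma_set 0" and t: "t \<in> tdom \<tau>"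
  shows "\<bar>y t $ 2 - SI_infected (y 0 $ 1 + y 0 $ 2) (y 0 $ 2) t\<bar>
           \<le> (2 * t * exp (2 * t) + 1) * \<epsilon> * t * exp (4 * t)"
proof -
  let ?N\<^sub>0 = "y 0 $ 1 + y 0 $ 2" and ?I\<^sub>0 = "y 0 $ 2"
  let ?N = "SI_total ?N\<^sub>0" and ?I = "SI_infected ?N\<^sub>0 ?I\<^sub>0"
  have sub: "{0..t} \<subseteq> tdom \<tau>" and t0: "0 \<le> t"
    using t atLeastAtMost_subset_tdom by (auto simp: tdom_def)
  then have init: "0 \<le> ?I\<^sub>0" "?I\<^sub>0 \<le> 1" "?N\<^sub>0 \<le> 1"
    using y_in[of 0] by (auto simp: Gamma_set_def)
  have \<epsilon>: "0 \<le> \<epsilon>"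
    using e\<^sub>2_bound[of 0] sub t0 by fastforce
  have I': "(?I has_real_derivative ?I s * (?N s - ?I s - 1)) (at s within {0..t})"
    if "s \<in> {0..t}" for s
    using that by (intro DERIV_subset[OF SI_infected_deriv[OF init(1)]]) auto
  have "\<bar>y t $ 2 - ?I t\<bar> \<le> ((2 * t * exp (2 * t) + 1) * \<epsilon>) * t * exp (2 * 2 * t)"
  proof (rule linear_ode_deviation_bound[where a = "\<lambda>s. y s $ 1 - 1 - ?I s"
        and b = "\<lambda>s. ?I s * (y s $ 1 + y s $ 2 - ?N s) + e\<^sub>2 s", OF t0])
    fix s assume s: "s \<in> {0..t}"
    then have s': "s \<in> tdom \<tau>" using sub by blast
    have I_bounds: "0 \<le> ?I s" "?I s \<le> 1"
      using SI_infected_bounds[OF init] s by auto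
    show "((\<lambda>s. y s $ 2 - ?I s) has_real_derivative
        (y s $ 1 - 1 - ?I s) * (y s $ 2 - ?I s) + (?I s * (y s $ 1 + y s $ 2 - ?N s) + e\<^sub>2 s))
        (at s within {0..t})"
      by (rule DERIV_cong[OF DERIV_diff[OF derivs_within_Icc(2)[OF t s] I'[OF s]]])
        (simp add: algebra_simps)
    show "\<bar>y s $ 1 - 1 - ?I s\<bar> \<le> 2"
      using y_in[OF s'] I_bounds by (auto simp: Gamma_set_def abs_le_iff)
    have "\<bar>?I s * (y s $ 1 + y s $ 2 - ?N s)\<bar> \<le> 1 * (2 * \<epsilon> * s * exp (2 * s))"
      unfolding abs_mult using I_bounds total_deviation[OF s'] by (intro mult_mono) auto
    also have "\<dots> \<le> 2 * \<epsilon> * t * exp (2 * t)"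
      using s \<epsilon> by (auto intro!: mult_mono)
    finally show "\<bar>?I s * (y s $ 1 + y s $ 2 - ?N s) + e\<^sub>2 s\<bar> \<le> (2 * t * exp (2 * t) + 1) * \<epsilon>"
      using e\<^sub>2_bound[OF s'] by (simp add: algebra_simps abs_le_iff)
  next
    show "continuous_on {0..t} (\<lambda>s. y s $ 1 - 1 - ?I s)"
      by (intro continuous_on_diff continuous_on_const DERIV_continuous_on[OF derivs_within_Icc(1)[OF t]]
          DERIV_continuous_on[OF I'])
  qed simp
  then show ?thesis by simp
qed

lemma deviation:
  assumes y_in: "\<And>s. s \<in> tdom \<tau> \<Longrightarrow> y s \<in> Gamma_set 0" and t: "t \<in> tdom \<tau>"
  shows "norm (SI_solution (y 0 $ 1 + y 0 $ 2) (y 0 $ 2) t - y t) \<le> SI_deviation_factor t * \<epsilon>"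
proof -
  let ?N = "SI_total (y 0 $ 1 + y 0 $ 2) t" and ?I = "SI_infected (y 0 $ 1 + y 0 $ 2) (y 0 $ 2) t"
  have "norm (SI_solution (y 0 $ 1 + y 0 $ 2) (y 0 $ 2) t - y t)
      \<le> \<bar>(?N - ?I) - y t $ 1\<bar> + \<bar>?I - y t $ 2\<bar>"
    using norm_le_l1_cart[of "SI_solution (y 0 $ 1 + y 0 $ 2) (y 0 $ 2) t - y t"]
    by (simp add: sum_2 SI_solution_def)
  also have "\<dots> \<le> \<bar>y t $ 1 + y t $ 2 - ?N\<bar> + 2 * \<bar>y t $ 2 - ?I\<bar>"
    by (auto simp: abs_if)
  also have "\<dots> \<le> 2 * \<epsilon> * t * exp (2 * t) + 2 * ((2 * t * exp (2 * t) + 1) * \<epsilon> * t * exp (4 * t))"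
    using total_deviation[OF t] infected_deviation[of t] y_in t by (meson add_mono mult_left_mono zero_le_numeral)
  also have "\<dots> = SI_deviation_factor t * \<epsilon>"
    by (simp add: SI_deviation_factor_def algebra_simps)
  finally show ?thesis .
qed

end

lemma cond_lip_shadowing_SI_Gamma:
  assumes c: "0 < c"
  shows "cond_lip_shadowing SI_field (Gamma_set c)"
  unfolding cond_lip_shadowing_def
proof (rule exI[of _ "c / 4"], intro conjI exI[of _ "SI_deviation_factor (2 / c)"] allI impI)
  show "0 < c / 4"
    using c by simp
  show "0 < SI_deviation_factor (2 / c)"
    using c by (simp add: SI_deviation_factor_pos)
  fix \<epsilon> \<tau> y
  assume "0 < \<epsilon> \<and> \<epsilon> \<le> c / 4 \<and> 0 < \<tau> \<and> pseudosol_le SI_field \<tau> y \<epsilon>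
    \<and> (\<forall>t\<in>tdom \<tau>. y t \<in> Gamma_set c)"
  then have \<epsilon>: "\<epsilon> \<le> c / 4" and \<tau>: "0 < \<tau>" and y: "pseudosol_le SI_field \<tau> y \<epsilon>"
    and y_in: "\<And>t. t \<in> tdom \<tau> \<Longrightarrow> y t \<in> Gamma_set c"
    by auto
  obtain e\<^sub>1 e\<^sub>2 where "SI_perturbed_solution \<tau> y \<epsilon> e\<^sub>1 e\<^sub>2"
    using pseudosol_le_SI_field_imp_perturbed_solution[OF y] by blast
  then interpret SI_perturbed_solution \<tau> y \<epsilon> e\<^sub>1 e\<^sub>2 .
  have y_in_0: "y t \<in> Gamma_set 0" if "t \<in> tdom \<tau>" for t
    using y_in[OF that] Gamma_set_antimono[of 0 c] c by auto
  have "0 \<le> y 0 $ 2"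
    using y_in_0[of 0] \<tau> by (simp add: tdom_def zero_ereal_def Gamma_set_def)
  then show "\<exists>x. is_solution SI_field \<tau> x
      \<and> (\<forall>t\<in>tdom \<tau>. norm (x t - y t) \<le> SI_deviation_factor (2 / c) * \<epsilon>)"
  proof (intro exI[of _ "SI_solution (y 0 $ 1 + y 0 $ 2) (y 0 $ 2)"] conjI ballI
      SI_solution_is_solution)
    fix t assume t: "t \<in> tdom \<tau>"
    have "SI_deviation_factor t * \<epsilon> \<le> SI_deviation_factor (2 / c) * \<epsilon>"
      using t time_bound_in_Gamma[OF c \<epsilon> y_in t] e\<^sub>1_bound[OF t]
      by (intro mult_right_mono SI_deviation_factor_mono) (auto simp: tdom_def)
    then show "norm (SI_solution (y 0 $ 1 + y 0 $ 2) (y 0 $ 2) t - y t)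
        \<le> SI_deviation_factor (2 / c) * \<epsilon>"
      using deviation[OF y_in_0 t] by linarith
  qed
qed

lemma SI_constant_pseudosol:
  "pseudosol_le SI_field \<tau> (\<lambda>t. vector [1 - d, d]) (2 * d\<^sup>2)"
  unfolding pseudosol_le_def
proof (intro exI[of _ "\<lambda>t. 0"] conjI ballI)
  fix t
  have "norm (0 - SI_field t (vector [1 - d, d])) \<le> \<bar>d\<^sup>2\<bar> + \<bar>- d\<^sup>2\<bar>"
    using norm_le_l1_cart[of "0 - SI_field t (vector [1 - d, d])"]
    by (simp add: sum_2 algebra_simps power2_eq_square)
  then show "norm (0 - SI_field t ((\<lambda>t. vector [1 - d, d]) t)) \<le> 2 * d\<^sup>2"
    by simp
qed (auto intro: continuous_intros)

lemma SI_solution_leaves_neighbourhood: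
  assumes d: "0 < d" and x: "is_solution SI_field \<infinity> x"
  shows "\<exists>t\<ge>0. d / 2 < norm (x t - vector [1 - d, d])"
proof (rule ccontr)
  assume "\<not> ?thesis"
  then have near: "\<bar>x t $ 1 - (1 - d)\<bar> \<le> d / 2" "\<bar>x t $ 2 - d\<bar> \<le> d / 2" if "0 \<le> t" for t
    using that component_le_norm_cart[of "x t - vector [1 - d, d]" 1]
      component_le_norm_cart[of "x t - vector [1 - d, d]" 2] by force+
  define T where "T = 8 / d"
  have T: "0 \<le> T"
    using d by (simp add: T_def)
  have "x T $ 2 - x 0 $ 2 \<le> - (d * d / 4) * (T - 0)"
  proof (rule DERIV_upper_bound_Icc[OF T, where f = "\<lambda>s. x s $ 2"])
    fix s assume s: "s \<in> {0..T}"
    have "(x has_vector_derivative SI_field s (x s)) (at s within {0..T})"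
      using x s unfolding is_solution_def
      by (auto simp: tdom_def intro: has_vector_derivative_within_subset)
    then show "((\<lambda>s. x s $ 2) has_real_derivative SI_field s (x s) $ 2) (at s within {0..T})"
      by (rule has_vector_derivative_vec_nth)
    have I: "x s $ 2 \<ge> d / 2" and S: "x s $ 1 - 1 \<le> - (d / 2)"
      using near[of s] s unfolding abs_le_iff by auto
    have "x s $ 2 * (x s $ 1 - 1) \<le> x s $ 2 * - (d / 2)"
      using I S d by (intro mult_left_mono) auto
    also have "\<dots> \<le> d / 2 * - (d / 2)"
      using I d by (intro mult_right_mono_neg) auto
    finally show "SI_field s (x s) $ 2 \<le> - (d * d / 4)"
      by (simp add: algebra_simps)
  qed
  also have "\<dots> = - 2 * d"
    using d by (simp add: T_def field_simps)
  finally show False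
    using near(2)[of 0] near(2)[OF T] d by (auto simp: abs_le_iff)
qed

lemma not_cond_lip_shadowing_SI_Gamma_0: "\<not> cond_lip_shadowing SI_field (Gamma_set 0)"
proof
  assume "cond_lip_shadowing SI_field (Gamma_set 0)"
  then obtain \<epsilon>\<^sub>0 \<kappa> where \<epsilon>\<^sub>0: "0 < \<epsilon>\<^sub>0" and \<kappa>: "0 < \<kappa>" and shadow: "\<And>\<epsilon> \<tau> y.
      0 < \<epsilon> \<and> \<epsilon> \<le> \<epsilon>\<^sub>0 \<and> 0 < \<tau> \<and> pseudosol_le SI_field \<tau> y \<epsilon> \<and> (\<forall>t\<in>tdom \<tau>. y t \<in> Gamma_set 0)
      \<Longrightarrow> \<exists>x. is_solution SI_field \<tau> x \<and> (\<forall>t\<in>tdom \<tau>. norm (x t - y t) \<le> \<kappa> * \<epsilon>)"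
    unfolding cond_lip_shadowing_def by blast
  define d where "d = min (1 / 2) (min (sqrt (\<epsilon>\<^sub>0 / 2)) (1 / (4 * \<kappa>)))"
  have d: "0 < d" "d \<le> 1 / 2"
    using \<epsilon>\<^sub>0 \<kappa> by (auto simp: d_def)
  have "d\<^sup>2 \<le> (sqrt (\<epsilon>\<^sub>0 / 2))\<^sup>2"
    using d by (intro power_mono) (auto simp: d_def)
  then have d_\<epsilon>\<^sub>0: "2 * d\<^sup>2 \<le> \<epsilon>\<^sub>0"
    using \<epsilon>\<^sub>0 by simp
  have "d \<le> 1 / (4 * \<kappa>)"
    by (simp add: d_def)
  then have d_\<kappa>: "\<kappa> * (2 * d\<^sup>2) \<le> d / 2"
    using \<kappa> d by (simp add: field_simps power2_eq_square)
  have "vector [1 - d, d] \<in> Gamma_set 0"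
    using d by (simp add: Gamma_set_def)
  then obtain x where x: "is_solution SI_field \<infinity> x"
    and close: "\<And>t. 0 \<le> t \<Longrightarrow> norm (x t - vector [1 - d, d]) \<le> \<kappa> * (2 * d\<^sup>2)"
    using shadow[of "2 * d\<^sup>2" \<infinity> "\<lambda>t. vector [1 - d, d]"] SI_constant_pseudosol d d_\<epsilon>\<^sub>0
    by (auto simp: tdom_def)
  show False
    using SI_solution_leaves_neighbourhood[OF d(1) x] close d_\<kappa> by fastforce
qed

theorem mainTheorem12:
  shows "(\<forall>c::real. 0 < c \<and> c < 1 \<longrightarrow> cond_lip_shadowing SI_field (Gamma_set c))
         \<and> \<not> cond_lip_shadowing SI_field (Gamma_set 0)"
  using cond_lip_shadowing_SI_Gamma not_cond_lip_shadowing_SI_Gamma_0 by blast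

end
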